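(* Let $y$ be a string over an alphabet $\Sigma$, let $a,b\in\Sigma$ and $x\in\Sigma^*$. Then $axb\in\mathrm{MAW}(y)$ if and only if all of the following hold: $x,ax\in\mathrm{Substr}(y)$; $x=\overleftarrow{x}$; $\mathrm{DAWG}(y)$ has the edge $([x]_R,b,[xb]_R)$; the suffix link of the node $[ax]_R$ leads to $[x]_R$; and the node $[ax]_R$ has no out-going edge labeled $b$.
   Context: $\mathrm{Substr}(y)$ is the set of substrings of $y$ (including the empty string). A string $w$ is a minimal absent word (MAW) of $y$ if $w\notin\mathrm{Substr}(y)$ but every proper substring of $w$ is in $\mathrm{Substr}(y)$; $\mathrm{MAW}(y)$ is the set of these. $\mathrm{EndPos}(x)=\{i\mid |x|\le i\le|y|,\ y[i-|x|+1..i]=x\}$; $u\equiv_R v$ iff $\mathrm{EndPos}(u)=\mathrm{EndPos}(v)$; $[x]_R$ is the class of $x$, and for $x\in\mathrm{Substr}(y)$, $\overleftarrow{x}$ is the longest element of $[x]_R$. $\mathrm{DAWG}(y)$ is the edge-labeled DAG with node set $\{[x]_R\mid x\in\mathrm{Substr}(y)\}$ and edge set $\{([x]_R,b,[xb]_R)\mid x,xb\in\mathrm{Substr}(y), b\in\Sigma\}$. Its suffix links are $\{([ax]_R,a,[x]_R)\mid x,ax\in\mathrm{Substr}(y), a\in\Sigma, [ax]_R\neq[x]_R\}$; each non-source node has exactly one out-going suffix link. *)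

theory Defs
  imports Main
begin

definition Substr :: "'a list \<Rightarrow> 'a list set" where
  "Substr y = {x. \<exists>u v. y = u @ x @ v}"

definition MAW :: "'a list \<Rightarrow> 'a list set" where
  "MAW y = {w. w \<notin> Substr y \<and> (\<forall>z \<in> Substr w. z \<noteq> w \<longrightarrow> z \<in> Substr y)}"

text \<open>End positions, 1-indexed: i with |x| <= i <= |y| and y[i-|x|+1..i] = x.\<close>
definition EndPos :: "'a list \<Rightarrow> 'a list \<Rightarrow> nat set" where
  "EndPos y x = {i. length x \<le> i \<and> i \<le> length y \<and> drop (i - length x) (take i y) = x}"

definition Rclass :: "'a list \<Rightarrow> 'a list \<Rightarrow> 'a list set" where
  "Rclass y x = {u. EndPos y u = EndPos y x}"

text \<open>The longest element of [x]_R (meaningful for x in Substr y).\<close>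
definition longest_rep :: "'a list \<Rightarrow> 'a list \<Rightarrow> 'a list" where
  "longest_rep y x = (THE u. u \<in> Rclass y x \<and> (\<forall>v \<in> Rclass y x. length v \<le> length u))"

definition dawg_nodes :: "'a list \<Rightarrow> 'a list set set" where
  "dawg_nodes y = {Rclass y x | x. x \<in> Substr y}"

definition dawg_edges :: "'a list \<Rightarrow> ('a list set \<times> 'a \<times> 'a list set) set" where
  "dawg_edges y = {(Rclass y x, b, Rclass y (x @ [b])) | x b.
      x \<in> Substr y \<and> x @ [b] \<in> Substr y}"

definition suffix_links :: "'a list \<Rightarrow> ('a list set \<times> 'a \<times> 'a list set) set" where
  "suffix_links y = {(Rclass y (a # x), a, Rclass y x) | x a.
      x \<in> Substr y \<and> a # x \<in> Substr y \<and> Rclass y (a # x) \<noteq> Rclass y x}"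

end

theory Submission
  imports Defs "HOL-Library.Sublist"
begin

text \<open>
  Every proper factor of \<open>axb\<close> is a factor of \<open>ax\<close> or of \<open>xb\<close>, so \<open>axb\<close> is a minimal absent
  word iff \<open>ax\<close> and \<open>xb\<close> occur in \<open>y\<close> and \<open>axb\<close> does not. Strings with the same end positions
  have the same right extensions, so the node \<open>[u]\<^sub>R\<close> has an out-going \<open>b\<close>-edge iff \<open>ub\<close>
  occurs; this turns the occurrence conditions on \<open>xb\<close> and \<open>axb\<close> into the edge conditions. As
  \<open>xb\<close> occurs but \<open>axb\<close> does not, \<open>[ax]\<^sub>R \<noteq> [x]\<^sub>R\<close>, which is the suffix link. Finally,
  were a longer string \<open>wcx\<close> \<open>R\<close>-equivalent to \<open>x\<close>, every occurrence of \<open>x\<close> would be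
  preceded by \<open>c\<close>; as \<open>ax\<close> occurs, \<open>c = a\<close> and \<open>[ax]\<^sub>R = [x]\<^sub>R\<close>, a contradiction.
\<close>

lemma mem_Substr_iff: "x \<in> Substr y \<longleftrightarrow> sublist x y"
  by (simp add: Substr_def sublist_def)

lemma strict_sublist_Cons_snoc:
  assumes "strict_sublist z (a # x @ [b])"
  shows "sublist z (a # x) \<or> sublist z (x @ [b])"
proof -
  have "prefix z ((a # x) @ [b]) \<or> sublist z (x @ [b])"
    using assms by (simp add: strict_sublist_def sublist_Cons_right)
  then show ?thesis
    using assms by (auto simp: strict_sublist_def simp del: append_Cons)
qed

lemma MAW_iff_strict_sublist:
  "w \<in> MAW y \<longleftrightarrow> \<not> sublist w y \<and> (\<forall>z. strict_sublist z w \<longrightarrow> sublist z y)"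
  by (auto simp: MAW_def mem_Substr_iff strict_sublist_def)

lemma Cons_snoc_MAW_iff:
  "a # x @ [b] \<in> MAW y \<longleftrightarrow>
     sublist (a # x) y \<and> sublist (x @ [b]) y \<and> \<not> sublist (a # x @ [b]) y"
proof -
  have "sublist (a # x) ((a # x) @ [b])" "sublist (x @ [b]) ([a] @ x @ [b])"
    by (rule sublist_append_rightI, rule sublist_append_leftI)
  then have "strict_sublist (a # x) (a # x @ [b])" "strict_sublist (x @ [b]) (a # x @ [b])"
    by (auto simp: strict_sublist_def)
  then show ?thesis
    unfolding MAW_iff_strict_sublist
    by (metis strict_sublist_Cons_snoc sublist_order.order_trans)
qed

lemma mem_EndPos_iff: "i \<in> EndPos y x \<longleftrightarrow> (\<exists>p q. y = p @ x @ q \<and> i = length p + length x)"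
proof
  assume "i \<in> EndPos y x"
  then have le: "length x \<le> i" "i \<le> length y" and x: "drop (i - length x) (take i y) = x"
    by (auto simp: EndPos_def)
  have "take i y = take (i - length x) (take i y) @ x"
    using x by (metis append_take_drop_id)
  then have "take i y = take (i - length x) y @ x"
    using le by (simp add: min_def)
  then have "y = take (i - length x) y @ x @ drop i y"
    by (metis append_assoc append_take_drop_id)
  then show "\<exists>p q. y = p @ x @ q \<and> i = length p + length x"
    using le by (intro exI[of _ "take (i - length x) y"] exI[of _ "drop i y"]) simp
qed (auto simp: EndPos_def)

lemma suffix_if_common_EndPos:
  assumes "i \<in> EndPos y u" "i \<in> EndPos y v" "length u \<le> length v"
  shows "suffix u v"
proof -
  obtain p q where "y = p @ u @ q" "i = length p + length u"
    using assms(1) by (auto simp: mem_EndPos_iff)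
  then have "take i y = p @ u" by simp
  moreover obtain p' q' where "y = p' @ v @ q'" "i = length p' + length v"
    using assms(2) by (auto simp: mem_EndPos_iff)
  then have "take i y = p' @ v" by simp
  ultimately show ?thesis
    using assms(3) by (metis suffix_appendI suffix_length_suffix suffix_order.refl)
qed

lemma EndPos_append_subset: "EndPos y (w @ s) \<subseteq> EndPos y s"
proof
  fix i assume "i \<in> EndPos y (w @ s)"
  then obtain p q where "y = (p @ w) @ s @ q" "i = length (p @ w) + length s"
    by (auto simp: mem_EndPos_iff)
  then show "i \<in> EndPos y s" unfolding mem_EndPos_iff by blast
qed

lemma EndPos_Cons_disjoint:
  assumes "a \<noteq> c"
  shows "EndPos y (a # x) \<inter> EndPos y (c # x) = {}"
proof (rule ccontr)
  assume "EndPos y (a # x) \<inter> EndPos y (c # x) \<noteq> {}"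
  then obtain i where "i \<in> EndPos y (a # x)" "i \<in> EndPos y (c # x)" by blast
  then have "suffix (a # x) (c # x)" by (rule suffix_if_common_EndPos) simp
  with assms show False by (simp add: suffix_def)
qed

lemma sublist_snoc_if_EndPos_eq:
  assumes "EndPos y u = EndPos y v" "sublist (u @ [b]) y"
  shows "sublist (v @ [b]) y"
proof -
  obtain p q where y: "y = p @ u @ b # q"
    using assms(2) by (auto simp: sublist_def)
  then have "length p + length u \<in> EndPos y u"
    by (auto simp: mem_EndPos_iff)
  then have "length p + length u \<in> EndPos y v"
    using assms(1) by simp
  then obtain p' q' where y': "y = p' @ v @ q'" "length p + length u = length p' + length v"
    by (auto simp: mem_EndPos_iff)
  have "q' = drop (length p' + length v) y" using y' by simp
  also have "\<dots> = b # q" using y y' by simp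
  finally show ?thesis using y' by (auto simp: sublist_def)
qed

lemma Rclass_eq_iff: "Rclass y u = Rclass y v \<longleftrightarrow> EndPos y u = EndPos y v"
proof
  assume "Rclass y u = Rclass y v"
  moreover have "u \<in> Rclass y u" by (simp add: Rclass_def)
  ultimately show "EndPos y u = EndPos y v" by (simp add: Rclass_def)
qed (simp add: Rclass_def)

lemma dawg_edgeI:
  assumes "sublist (x @ [b]) y"
  shows "(Rclass y x, b, Rclass y (x @ [b])) \<in> dawg_edges y"
proof -
  have "sublist x y"
    using sublist_order.order_trans[OF sublist_append_rightI assms] .
  then show ?thesis
    using assms unfolding dawg_edges_def mem_Substr_iff by blast
qed

lemma dawg_out_edge_iff: "(\<exists>T. (Rclass y u, b, T) \<in> dawg_edges y) \<longleftrightarrow> sublist (u @ [b]) y"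
proof
  assume "\<exists>T. (Rclass y u, b, T) \<in> dawg_edges y"
  then obtain u' where "Rclass y u = Rclass y u'" "sublist (u' @ [b]) y"
    unfolding dawg_edges_def mem_Substr_iff by blast
  then show "sublist (u @ [b]) y"
    by (metis Rclass_eq_iff sublist_snoc_if_EndPos_eq)
next
  assume "sublist (u @ [b]) y"
  then have "(Rclass y u, b, Rclass y (u @ [b])) \<in> dawg_edges y"
    by (rule dawg_edgeI)
  then show "\<exists>T. (Rclass y u, b, T) \<in> dawg_edges y" ..
qed

lemma dawg_edge_iff: "(Rclass y x, b, Rclass y (x @ [b])) \<in> dawg_edges y \<longleftrightarrow> sublist (x @ [b]) y"
proof
  assume "(Rclass y x, b, Rclass y (x @ [b])) \<in> dawg_edges y"
  then show "sublist (x @ [b]) y"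
    unfolding dawg_out_edge_iff [symmetric] by (rule exI)
qed (rule dawg_edgeI)

lemma suffix_linksI:
  assumes "sublist (a # x) y" "Rclass y (a # x) \<noteq> Rclass y x"
  shows "(Rclass y (a # x), a, Rclass y x) \<in> suffix_links y"
proof -
  have "sublist x y"
    using assms(1) sublist_order.order_trans[of x "a # x" y] by (simp add: sublist_Cons_right)
  then show ?thesis
    using assms unfolding suffix_links_def mem_Substr_iff by blast
qed

lemma longest_rep_eqI:
  assumes "EndPos y u \<noteq> {}" "\<And>v. EndPos y v = EndPos y u \<Longrightarrow> length v \<le> length u"
  shows "longest_rep y u = u"
  unfolding longest_rep_def
proof (rule the_equality)
  show "u \<in> Rclass y u \<and> (\<forall>v\<in>Rclass y u. length v \<le> length u)"
    using assms(2) by (simp add: Rclass_def)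
next
  fix v assume v: "v \<in> Rclass y u \<and> (\<forall>w\<in>Rclass y u. length w \<le> length v)"
  then have len: "length v = length u"
    using assms(2) by (simp add: Rclass_def le_antisym)
  obtain i where "i \<in> EndPos y v" "i \<in> EndPos y u"
    using assms(1) v by (auto simp: Rclass_def)
  then have "suffix v u"
    by (rule suffix_if_common_EndPos) (simp add: len)
  with len show "v = u"
    by (auto simp: suffix_def)
qed

lemma longest_rep_eq_if_Rclass_Cons_neq:
  assumes "sublist (a # x) y" "Rclass y (a # x) \<noteq> Rclass y x"
  shows "longest_rep y x = x"
proof (rule longest_rep_eqI)
  obtain j where j: "j \<in> EndPos y (a # x)"
    using assms(1) by (auto simp: sublist_def mem_EndPos_iff)
  then have jx: "j \<in> EndPos y x"
    using EndPos_append_subset[of y "[a]" x] by auto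
  then show "EndPos y x \<noteq> {}" by blast
  fix v assume v: "EndPos y v = EndPos y x"
  show "length v \<le> length x"
  proof (rule ccontr)
    assume "\<not> length v \<le> length x"
    then have long: "length x < length v" by simp
    have "j \<in> EndPos y v" using jx v by simp
    then have "suffix x v"
      using suffix_if_common_EndPos[OF jx _ less_imp_le[OF long]] by blast
    then obtain z where vz: "v = z @ x"
      unfolding suffix_def by blast
    with long have "z \<noteq> []" by auto
    then obtain w c where "z = w @ [c]"
      by (cases z rule: rev_cases) simp_all
    with vz have "EndPos y v \<subseteq> EndPos y (c # x)"
      using EndPos_append_subset[of y w "c # x"] by simp
    moreover have "EndPos y (c # x) \<subseteq> EndPos y x"
      using EndPos_append_subset[of y "[c]" x] by simp
    ultimately have cx: "EndPos y (c # x) = EndPos y x"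
      using v by blast
    with jx have "j \<in> EndPos y (c # x)" by simp
    with j have "a = c"
      using EndPos_Cons_disjoint[of a c y x] by blast
    with cx show False using assms(2) by (simp add: Rclass_eq_iff)
  qed
qed

theorem lemma9:
  fixes y x :: "'a list" and a b :: 'a
  shows "a # x @ [b] \<in> MAW y \<longleftrightarrow>
    (x \<in> Substr y \<and> a # x \<in> Substr y \<and>
     x = longest_rep y x \<and>
     (Rclass y x, b, Rclass y (x @ [b])) \<in> dawg_edges y \<and>
     (\<exists>c. (Rclass y (a # x), c, Rclass y x) \<in> suffix_links y) \<and>
     \<not> (\<exists>T. (Rclass y (a # x), b, T) \<in> dawg_edges y))"
proof
  assume "a # x @ [b] \<in> MAW y"
  then have ax: "sublist (a # x) y" and xb: "sublist (x @ [b]) y"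
    and axb: "\<not> sublist (a # x @ [b]) y"
    by (simp_all add: Cons_snoc_MAW_iff)
  have "Rclass y (a # x) \<noteq> Rclass y x"
    using sublist_snoc_if_EndPos_eq[of y x "a # x" b] xb axb by (auto simp: Rclass_eq_iff)
  then show "x \<in> Substr y \<and> a # x \<in> Substr y \<and> x = longest_rep y x \<and>
     (Rclass y x, b, Rclass y (x @ [b])) \<in> dawg_edges y \<and>
     (\<exists>c. (Rclass y (a # x), c, Rclass y x) \<in> suffix_links y) \<and>
     \<not> (\<exists>T. (Rclass y (a # x), b, T) \<in> dawg_edges y)"
    unfolding mem_Substr_iff dawg_edge_iff dawg_out_edge_iff
    using ax xb axb longest_rep_eq_if_Rclass_Cons_neq[OF ax] suffix_linksI[OF ax]
      sublist_order.order_trans[OF sublist_append_rightI xb]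
    by auto
next
  assume "x \<in> Substr y \<and> a # x \<in> Substr y \<and> x = longest_rep y x \<and>
     (Rclass y x, b, Rclass y (x @ [b])) \<in> dawg_edges y \<and>
     (\<exists>c. (Rclass y (a # x), c, Rclass y x) \<in> suffix_links y) \<and>
     \<not> (\<exists>T. (Rclass y (a # x), b, T) \<in> dawg_edges y)"
  then have "sublist (a # x) y" "sublist (x @ [b]) y" "\<not> sublist ((a # x) @ [b]) y"
    unfolding mem_Substr_iff dawg_edge_iff dawg_out_edge_iff by blast+
  then show "a # x @ [b] \<in> MAW y"
    by (simp add: Cons_snoc_MAW_iff)
qed

end
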